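(* Let $s\in\{0,\dots,r-3\}$ and $g\in\mathcal{V}_s$. Then for every $\alpha\in\mathbb{Q}$ the periodic function $m\mapsto g(m)e^{i\pi m^2\alpha/(2P)}$ has mean value zero; consequently, for every $\nu\in\mathbb{Z}_{\ge0}$ and $\alpha\in\mathbb{Q}$, the non-tangential limit $\lim_{\tau\to\alpha}\Theta(\tau;\nu,g,2P)$ from within $\mathbb{H}$ exists.
   Context: $r\ge3$; $p_1,\dots,p_r$ positive pairwise coprime, $p_2,\dots,p_r$ odd; $P=p_1\cdots p_r$, $\hat p_j=P/p_j$; $E=\{\pm1\}^r$. $\mathfrak{H}$: $\underline h\in\mathbb{Z}^r$ with $0\le h_j\le p_j$, $h_j/p_j\notin\mathbb{Z}$ for at least three $j$; $\mathfrak{L}$: those with $h_j$ even for $j\ge2$. $J^{\underline h}=\{j:p_j\mid h_j\}$, $\mathcal{N}^{\underline h}(\underline\varepsilon)=P+\sum_j\varepsilon_jh_j\hat p_j$. For $J\cap J^{\underline h}=\emptyset$: $g_J^{\underline h}(n)=\prod_{j\in J}\varepsilon_j$ if $n\equiv\mathcal{N}^{\underline h}(\underline\varepsilon)\bmod2P$ for some $\underline\varepsilon\in E$ (independent of the choice), else $0$. $\mathcal{V}_s=\mathrm{span}_{\mathbb{C}}\{g_J^{\underline\ell}:|J|\ge r-s,\ |J|\equiv r-s\bmod 2,\ \underline\ell\in\mathfrak{L},\ J\cap J^{\underline\ell}=\emptyset\}$. $\Theta(\tau;\nu,g,M)=\sum_{n\ge1}n^\nu g(n)e^{i\pi n^2\tau/M}$.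 *)

theory Defs
  imports "HOL-Analysis.Analysis" "HOL-Number_Theory.Cong"
begin

definition Pprod :: "nat \<Rightarrow> (nat \<Rightarrow> int) \<Rightarrow> int" where
  "Pprod r p = (\<Prod>j\<in>{1..r}. p j)"

text \<open>E = {+1,-1}^r, represented extensionally (value 1 outside 1..r).\<close>
definition signs :: "nat \<Rightarrow> (nat \<Rightarrow> int) set" where
  "signs r = {\<epsilon>. (\<forall>j\<in>{1..r}. \<epsilon> j = 1 \<or> \<epsilon> j = -1) \<and> (\<forall>j. j \<notin> {1..r} \<longrightarrow> \<epsilon> j = 1)}"

text \<open>The set frak H (vectors h in Z^r, represented extensionally with value 0 outside 1..r).\<close>
definition setH :: "nat \<Rightarrow> (nat \<Rightarrow> int) \<Rightarrow> (nat \<Rightarrow> int) set" where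
  "setH r p = {h. (\<forall>j. j \<notin> {1..r} \<longrightarrow> h j = 0) \<and>
                  (\<forall>j\<in>{1..r}. 0 \<le> h j \<and> h j \<le> p j) \<and>
                  3 \<le> card {j\<in>{1..r}. \<not> p j dvd h j}}"

definition setL :: "nat \<Rightarrow> (nat \<Rightarrow> int) \<Rightarrow> (nat \<Rightarrow> int) set" where
  "setL r p = {h \<in> setH r p. \<forall>j\<in>{2..r}. even (h j)}"

definition Jset :: "nat \<Rightarrow> (nat \<Rightarrow> int) \<Rightarrow> (nat \<Rightarrow> int) \<Rightarrow> nat set" where
  "Jset r p h = {j\<in>{1..r}. p j dvd h j}"

definition Nval :: "nat \<Rightarrow> (nat \<Rightarrow> int) \<Rightarrow> (nat \<Rightarrow> int) \<Rightarrow> (nat \<Rightarrow> int) \<Rightarrow> int" where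
  "Nval r p h \<epsilon> = Pprod r p + (\<Sum>j\<in>{1..r}. \<epsilon> j * h j * (Pprod r p div p j))"

text \<open>g_J^h(n): product of eps_j over J for a (any) eps with n = N^h(eps) mod 2P, else 0.\<close>
definition gJ :: "nat \<Rightarrow> (nat \<Rightarrow> int) \<Rightarrow> nat set \<Rightarrow> (nat \<Rightarrow> int) \<Rightarrow> int \<Rightarrow> complex" where
  "gJ r p J h n =
     (if \<exists>\<epsilon>\<in>signs r. [n = Nval r p h \<epsilon>] (mod (2 * Pprod r p))
      then of_int (\<Prod>j\<in>J. (SOME \<epsilon>. \<epsilon> \<in> signs r \<and> [n = Nval r p h \<epsilon>] (mod (2 * Pprod r p))) j)
      else 0)"

definition genV :: "nat \<Rightarrow> (nat \<Rightarrow> int) \<Rightarrow> nat \<Rightarrow> (int \<Rightarrow> complex) set" where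
  "genV r p s = {gJ r p J l | J l. J \<subseteq> {1..r} \<and> r - s \<le> card J \<and> [card J = r - s] (mod 2)
                   \<and> l \<in> setL r p \<and> J \<inter> Jset r p l = {}}"

definition Vspace :: "nat \<Rightarrow> (nat \<Rightarrow> int) \<Rightarrow> nat \<Rightarrow> (int \<Rightarrow> complex) set" where
  "Vspace r p s = {f. \<exists>S c. finite S \<and> S \<subseteq> genV r p s \<and> f = (\<lambda>n. \<Sum>\<phi>\<in>S. c \<phi> * \<phi> n)}"

definition Theta :: "complex \<Rightarrow> nat \<Rightarrow> (int \<Rightarrow> complex) \<Rightarrow> real \<Rightarrow> complex" where
  "Theta \<tau> \<nu> g M = (\<Sum>n. of_nat (Suc n) ^ \<nu> * g (int (Suc n)) *
                           exp (\<i> * pi * of_nat (Suc n)^2 * \<tau> / of_real M))"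

definition has_mean_value :: "(int \<Rightarrow> complex) \<Rightarrow> complex \<Rightarrow> bool" where
  "has_mean_value f L \<longleftrightarrow> ((\<lambda>N. (\<Sum>m=1..N. f (int m)) / of_nat N) \<longlonglongrightarrow> L)"

definition stolz :: "real \<Rightarrow> real \<Rightarrow> complex set" where
  "stolz \<alpha> C = {\<tau>. 0 < Im \<tau> \<and> \<bar>Re \<tau> - \<alpha>\<bar> \<le> C * Im \<tau>}"

definition nontangential_limit_exists :: "(complex \<Rightarrow> complex) \<Rightarrow> real \<Rightarrow> bool" where
  "nontangential_limit_exists f \<alpha> \<longleftrightarrow>
     (\<exists>L. \<forall>C>0. (f \<longlongrightarrow> L) (at (complex_of_real \<alpha>) within stolz \<alpha> C))"

end

theory Submission
  imports Defs "HOL-Complex_Analysis.Cauchy_Integral_Formula"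
begin

(* Each generator g_J^l of V_s has an index j >= 2 in J, because |J| >= 3. Replacing n by n'
   with n' = -n mod p_j and n' = n mod 2P/p_j flips the sign eps_j in N(eps), so it negates
   g_J^l. For rational alpha the phase e^(i pi m^2 alpha/(2P)) only depends on m^2 modulo some
   multiple N of 2P, and a square root e of unity mod N with e = -1 mod p_j, e = 1 mod 2P/p_j
   permutes the residues mod N, fixes the phase and negates g_J^l; so the twisted function has
   zero sum over a period. Its partial sums are therefore periodic and bounded, which gives mean
   value zero, and allows summation by parts nu + 2 times in the theta series. By Cauchy's estimate
   the (nu + 2)-nd differences of n^nu e^(i pi n^2 (tau - alpha)/(2P)) are O(n^-2) uniformly in
   every Stolz angle at alpha, so the remaining series converges uniformly there. *)

section \<open>Periodic sequences with zero sum over a period\<close>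

definition zero_sum_periodic :: "nat \<Rightarrow> (nat \<Rightarrow> 'a::comm_monoid_add) \<Rightarrow> bool" where
  "zero_sum_periodic T f \<longleftrightarrow> 0 < T \<and> (\<forall>n. f (n + T) = f n) \<and> (\<Sum>n<T. f n) = 0"

lemma periodic_nat_add_mult:
  fixes T :: nat
  assumes "\<forall>n. f (n + T) = f n"
  shows "f (k * T + m) = f m"
proof (induction k)
  case (Suc k)
  have "f (Suc k * T + m) = f ((k * T + m) + T)" by (simp add: algebra_simps)
  then show ?case using assms Suc by simp
qed simp

lemma periodic_nat_bounded:
  fixes f :: "nat \<Rightarrow> 'a::real_normed_vector"
  assumes "0 < T" "\<forall>n. f (n + T) = f n"
  obtains B where "\<And>n. norm (f n) \<le> B"
proof -
  have "norm (f n) \<le> Max ((\<lambda>m. norm (f m)) ` {..<T})" for n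
    using periodic_nat_add_mult[OF assms(2), of "n div T" "n mod T"] assms(1)
    by (intro Max_ge) auto
  then show ?thesis using that by blast
qed

lemma zero_sum_periodic_partial_sums:
  assumes "zero_sum_periodic T f"
  shows "(\<Sum>n<N + T. f n) = (\<Sum>n<N. f n)"
proof (induction N)
  case (Suc N)
  have "(\<Sum>n<Suc N + T. f n) = (\<Sum>n<N + T. f n) + f (N + T)" by simp
  then show ?case using Suc assms by (simp add: zero_sum_periodic_def)
qed (use assms in \<open>simp add: zero_sum_periodic_def\<close>)

lemma zero_sum_periodic_bounded_partial_sums:
  fixes f :: "nat \<Rightarrow> 'a::real_normed_vector"
  assumes "zero_sum_periodic T f"
  obtains B where "\<And>N. norm (\<Sum>n<N. f n) \<le> B"
proof (rule periodic_nat_bounded)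
  show "0 < T" using assms by (simp add: zero_sum_periodic_def)
  show "\<forall>N. (\<Sum>n<N + T. f n) = (\<Sum>n<N. f n)"
    using zero_sum_periodic_partial_sums[OF assms] by blast
qed (rule that)

lemma zero_sum_periodic_bounded:
  fixes f :: "nat \<Rightarrow> 'a::real_normed_vector"
  assumes "zero_sum_periodic T f"
  obtains B where "\<And>n. norm (f n) \<le> B"
proof (rule periodic_nat_bounded)
  show "0 < T" "\<forall>n. f (n + T) = f n" using assms by (simp_all add: zero_sum_periodic_def)
qed (rule that)

lemma zero_sum_periodic_mean_tendsto_zero:
  fixes f :: "nat \<Rightarrow> 'a::real_normed_field"
  assumes "zero_sum_periodic T f"
  shows "(\<lambda>N. (\<Sum>n<N. f n) / of_nat N) \<longlonglongrightarrow> 0"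
proof -
  obtain B where B: "\<And>N. norm (\<Sum>n<N. f n) \<le> B"
    using zero_sum_periodic_bounded_partial_sums[OF assms] by blast
  show ?thesis
  proof (rule Lim_null_comparison)
    show "\<forall>\<^sub>F N in sequentially. norm ((\<Sum>n<N. f n) / of_nat N) \<le> B / real N"
      using B by (intro always_eventually allI) (simp add: norm_divide divide_right_mono)
    show "(\<lambda>N. B / real N) \<longlonglongrightarrow> 0" by (rule lim_const_over_n)
  qed
qed

lemma zero_sum_periodic_Suc_int:
  fixes F :: "int \<Rightarrow> 'a::cancel_comm_monoid_add"
  assumes N: "0 < N" and per: "\<And>m. F (m + N) = F m" and sum: "(\<Sum>n<nat N. F (int n)) = 0"
  shows "zero_sum_periodic (nat N) (\<lambda>n. F (int (Suc n)))"
proof -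
  have "F 0 + (\<Sum>n<nat N. F (int (Suc n))) = (\<Sum>n<Suc (nat N). F (int n))"
    by (subst sum.lessThan_Suc_shift) simp
  also have "\<dots> = F 0 + (\<Sum>n<nat N. F (int n))"
    using per[of 0] N by (simp add: add.commute)
  finally have "(\<Sum>n<nat N. F (int (Suc n))) = 0" using sum by simp
  moreover have "F (int (Suc n + nat N)) = F (int (Suc n))" for n
  proof -
    have "int (Suc n + nat N) = int (Suc n) + N" using N by simp
    then show ?thesis by (simp only: per)
  qed
  ultimately show ?thesis unfolding zero_sum_periodic_def using N by simp
qed

lemma has_mean_value_zero_if_zero_sum_periodic:
  assumes "zero_sum_periodic T (\<lambda>n. F (int (Suc n)))"
  shows "has_mean_value F 0"
  unfolding has_mean_value_def
  using zero_sum_periodic_mean_tendsto_zero[OF assms] sum.atLeast1_atMost_eq[of "\<lambda>m. F (int m)"]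
  by simp

section \<open>Summation by parts\<close>

definition fwd_diff :: "('a::{plus,one} \<Rightarrow> 'b::ab_group_add) \<Rightarrow> 'a \<Rightarrow> 'b" where
  "fwd_diff h x = h (x + 1) - h x"

lemma summable_mult_bounded:
  fixes g \<phi> :: "nat \<Rightarrow> 'a::{real_normed_algebra,banach}"
  assumes "\<And>n. norm (g n) \<le> B" "summable (\<lambda>n. norm (\<phi> n))"
  shows "summable (\<lambda>n. g n * \<phi> n)"
proof (rule summable_norm_cancel, rule summable_comparison_test[where g="\<lambda>n. B * norm (\<phi> n)"])
  show "\<exists>N. \<forall>n\<ge>N. norm (norm (g n * \<phi> n)) \<le> B * norm (\<phi> n)"
    using assms(1) by (auto intro!: order.trans[OF norm_mult_ineq] mult_right_mono)
  show "summable (\<lambda>n. B * norm (\<phi> n))" using assms(2) by (rule summable_mult)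
qed

lemma summable_norm_fwd_diff_funpow:
  fixes \<phi> :: "nat \<Rightarrow> 'a::real_normed_vector"
  assumes "summable (\<lambda>n. norm (\<phi> n))"
  shows "summable (\<lambda>n. norm ((fwd_diff ^^ k) \<phi> n))"
proof (induction k)
  case (Suc k)
  let ?\<psi> = "(fwd_diff ^^ k) \<phi>"
  show ?case
  proof (rule summable_comparison_test[where g="\<lambda>n. norm (?\<psi> (Suc n)) + norm (?\<psi> n)"])
    show "\<exists>N. \<forall>n\<ge>N. norm (norm ((fwd_diff ^^ Suc k) \<phi> n)) \<le> norm (?\<psi> (Suc n)) + norm (?\<psi> n)"
      by (auto simp: fwd_diff_def norm_triangle_ineq4)
    show "summable (\<lambda>n. norm (?\<psi> (Suc n)) + norm (?\<psi> n))"
      using Suc by (intro summable_add) (auto simp: summable_Suc_iff[of "\<lambda>n. norm (?\<psi> n)"])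
  qed
qed (simp add: assms)

lemma suminf_fwd_diff_mult:
  fixes G \<phi> :: "nat \<Rightarrow> 'a::{real_normed_algebra,banach}"
  assumes B: "\<And>n. norm (G n) \<le> B" and sp: "summable (\<lambda>n. norm (\<phi> n))"
  shows "(\<Sum>n. fwd_diff G n * \<phi> n) = - (G 0 * \<phi> 0) - (\<Sum>n. G (Suc n) * fwd_diff \<phi> n)"
proof -
  have sp': "summable (\<lambda>n. norm (\<phi> (Suc n)))"
    using sp by (simp add: summable_Suc_iff[of "\<lambda>n. norm (\<phi> n)"])
  have s1: "summable (\<lambda>n. G (Suc n) * \<phi> n)" by (rule summable_mult_bounded[OF B sp])
  have s2: "summable (\<lambda>n. G n * \<phi> n)" by (rule summable_mult_bounded[OF B sp])
  have s3: "summable (\<lambda>n. G (Suc n) * \<phi> (Suc n))" by (rule summable_mult_bounded[OF B sp'])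
  have lhs: "(\<Sum>n. fwd_diff G n * \<phi> n) = (\<Sum>n. G (Suc n) * \<phi> n) - (\<Sum>n. G n * \<phi> n)"
    using suminf_diff[OF s1 s2] by (simp add: fwd_diff_def left_diff_distrib)
  have rhs: "(\<Sum>n. G (Suc n) * fwd_diff \<phi> n) = (\<Sum>n. G (Suc n) * \<phi> (Suc n)) - (\<Sum>n. G (Suc n) * \<phi> n)"
    using suminf_diff[OF s3 s1] by (simp add: fwd_diff_def right_diff_distrib)
  have head: "(\<Sum>n. G n * \<phi> n) = G 0 * \<phi> 0 + (\<Sum>n. G (Suc n) * \<phi> (Suc n))"
    using suminf_split_head[OF s2] by simp
  show ?thesis unfolding lhs rhs head by (simp add: algebra_simps)
qed

text \<open>Abel summation against the partial sums, recentred by their mean \<open>c\<close> so that the new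
  coefficients again have zero sum over a period.\<close>

lemma summation_by_parts_step:
  fixes f :: "nat \<Rightarrow> complex"
  assumes f: "zero_sum_periodic T f"
  obtains c f1 where "zero_sum_periodic T f1"
    and "\<And>\<phi>. summable (\<lambda>n. norm (\<phi> n)) \<Longrightarrow>
           (\<Sum>n. f n * \<phi> n) = c * \<phi> 0 + (\<Sum>n. f1 n * fwd_diff \<phi> n)"
proof -
  define S where "S n = (\<Sum>m<n. f m)" for n
  have T: "0 < T" using f by (simp add: zero_sum_periodic_def)
  have S: "S (n + T) = S n" for n
    unfolding S_def by (rule zero_sum_periodic_partial_sums[OF f])
  define c where "c = (\<Sum>n<T. S (Suc n)) / of_nat T"
  define G where "G n = S n - c" for n
  have "G (n + T) = G n" for n using S by (simp add: G_def)
  then obtain B where B: "\<And>n. norm (G n) \<le> B"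
    using periodic_nat_bounded[OF T] by blast
  have "zero_sum_periodic T (\<lambda>n. - G (Suc n))"
    using S T by (simp add: zero_sum_periodic_def G_def sum_subtractf c_def flip: add_Suc)
  moreover have "(\<Sum>n. f n * \<phi> n) = c * \<phi> 0 + (\<Sum>n. - G (Suc n) * fwd_diff \<phi> n)"
    if sp: "summable (\<lambda>n. norm (\<phi> n))" for \<phi>
  proof -
    have "summable (\<lambda>n. G (Suc n) * fwd_diff \<phi> n)"
      using summable_norm_fwd_diff_funpow[OF sp, of 1] B by (intro summable_mult_bounded) simp_all
    moreover have "f n = fwd_diff G n" for n by (simp add: fwd_diff_def G_def S_def)
    moreover have "G 0 = - c" by (simp add: G_def S_def)
    ultimately show ?thesis
      using suminf_fwd_diff_mult[OF B sp] by (simp add: suminf_minus)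
  qed
  ultimately show ?thesis by (rule that)
qed

lemma summation_by_parts:
  fixes f :: "nat \<Rightarrow> complex"
  assumes "zero_sum_periodic T f"
  obtains b fK where "zero_sum_periodic T fK"
    and "\<And>\<phi>. summable (\<lambda>n. norm (\<phi> n)) \<Longrightarrow>
           (\<Sum>n. f n * \<phi> n) = (\<Sum>k<K. b k * (fwd_diff ^^ k) \<phi> 0) + (\<Sum>n. fK n * (fwd_diff ^^ K) \<phi> n)"
proof (induction K arbitrary: thesis)
  case 0
  show ?case by (rule 0[of f "\<lambda>_. 0"]) (use assms in simp_all)
next
  case (Suc K)
  obtain b fK where fK: "zero_sum_periodic T fK"
    and eq: "\<And>\<phi>. summable (\<lambda>n. norm (\<phi> n)) \<Longrightarrow>
        (\<Sum>n. f n * \<phi> n) = (\<Sum>k<K. b k * (fwd_diff ^^ k) \<phi> 0) + (\<Sum>n. fK n * (fwd_diff ^^ K) \<phi> n)"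
    by (rule Suc.IH) blast
  obtain c f1 where f1: "zero_sum_periodic T f1"
    and eq1: "\<And>\<phi>. summable (\<lambda>n. norm (\<phi> n)) \<Longrightarrow>
        (\<Sum>n. fK n * \<phi> n) = c * \<phi> 0 + (\<Sum>n. f1 n * fwd_diff \<phi> n)"
    by (rule summation_by_parts_step[OF fK]) blast
  show ?case
  proof (rule Suc.prems[OF f1, of "b(K := c)"])
    fix \<phi> :: "nat \<Rightarrow> complex" assume sp: "summable (\<lambda>n. norm (\<phi> n))"
    have "(\<Sum>k<K. (b(K := c)) k * (fwd_diff ^^ k) \<phi> 0) = (\<Sum>k<K. b k * (fwd_diff ^^ k) \<phi> 0)"
      by (intro sum.cong) auto
    then show "(\<Sum>n. f n * \<phi> n) = (\<Sum>k<Suc K. (b(K := c)) k * (fwd_diff ^^ k) \<phi> 0)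
        + (\<Sum>n. f1 n * (fwd_diff ^^ Suc K) \<phi> n)"
      using eq[OF sp] eq1[OF summable_norm_fwd_diff_funpow[OF sp, of K]] by simp
  qed
qed

lemma fwd_diff_funpow_of_nat_Suc:
  fixes h :: "'a::semiring_1 \<Rightarrow> 'b::ab_group_add"
  shows "(fwd_diff ^^ k) (\<lambda>n. h (of_nat (Suc n))) n = (fwd_diff ^^ k) h (of_nat (Suc n))"
proof (induction k arbitrary: n)
  case (Suc k)
  show ?case using Suc[of "Suc n"] Suc[of n] by (simp add: fwd_diff_def add.commute)
qed simp

lemma holomorphic_on_UNIV_shift:
  assumes "h holomorphic_on UNIV"
  shows "(\<lambda>w. h (w + a)) holomorphic_on UNIV"
proof -
  have "(h \<circ> (\<lambda>w. w + a)) holomorphic_on UNIV"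
    by (rule holomorphic_on_compose) (auto intro!: holomorphic_intros intro: holomorphic_on_subset[OF assms])
  then show ?thesis by (simp add: o_def)
qed

lemma holomorphic_fwd_diff:
  "h holomorphic_on UNIV \<Longrightarrow> fwd_diff h holomorphic_on UNIV"
  unfolding fwd_diff_def by (intro holomorphic_intros holomorphic_on_UNIV_shift)

lemma higher_deriv_fwd_diff:
  assumes "h holomorphic_on UNIV"
  shows "(deriv ^^ K) (fwd_diff h) y = fwd_diff ((deriv ^^ K) h) y"
proof -
  have "(deriv ^^ K) (fwd_diff h) y = (deriv ^^ K) (\<lambda>w. h (w + 1)) y - (deriv ^^ K) h y"
    unfolding fwd_diff_def
    by (rule higher_deriv_diff) (auto intro: holomorphic_on_UNIV_shift assms)
  also have "(deriv ^^ K) (\<lambda>w. h (w + 1)) y = (deriv ^^ K) (\<lambda>w. h (1 * w + 1)) y" by simp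
  also have "(deriv ^^ K) (\<lambda>w. h (1 * w + 1)) y = 1 ^ K * (deriv ^^ K) h (1 * y + 1)"
    by (rule higher_deriv_compose_linear'[OF assms open_UNIV open_UNIV]) auto
  finally show ?thesis by (simp add: fwd_diff_def[abs_def])
qed

lemma norm_fwd_diff_le:
  assumes "g holomorphic_on UNIV"
    and "\<And>u. 0 \<le> u \<Longrightarrow> u \<le> 1 \<Longrightarrow> norm (deriv g (y + of_real u)) \<le> B"
  shows "norm (fwd_diff g y) \<le> B"
proof -
  have "norm (g (y + 1) - g y) \<le> B * norm ((y + 1) - y)"
  proof (rule field_differentiable_bound[of "closed_segment y (y + 1)" g "deriv g"])
    show "(g has_field_derivative deriv g z) (at z within closed_segment y (y + 1))" for z
      by (rule holomorphic_derivI[OF assms(1)]) auto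
    show "norm (deriv g z) \<le> B" if z: "z \<in> closed_segment y (y + 1)" for z
    proof -
      obtain u where u: "0 \<le> u" "u \<le> 1" "z = (1 - u) *\<^sub>R y + u *\<^sub>R (y + 1)"
        using z by (auto simp: in_segment)
      then have "z = y + of_real u" by (simp add: scaleR_conv_of_real algebra_simps)
      then show ?thesis using assms(2) u by simp
    qed
  qed auto
  then show ?thesis by (simp add: fwd_diff_def)
qed

lemma norm_fwd_diff_funpow_le:
  assumes "h holomorphic_on UNIV"
    and "\<And>t. 0 \<le> t \<Longrightarrow> t \<le> real K \<Longrightarrow> norm ((deriv ^^ K) h (x + of_real t)) \<le> B"
  shows "norm ((fwd_diff ^^ K) h x) \<le> B"
  using assms
proof (induction K arbitrary: h)
  case 0
  then show ?case using "0.prems"(2)[of 0] by simp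
next
  case (Suc K)
  have "norm ((fwd_diff ^^ K) (fwd_diff h) x) \<le> B"
  proof (rule Suc.IH[OF holomorphic_fwd_diff[OF Suc.prems(1)]])
    fix t assume t: "0 \<le> t" "t \<le> real K"
    have "norm (fwd_diff ((deriv ^^ K) h) (x + of_real t)) \<le> B"
    proof (rule norm_fwd_diff_le)
      show "(deriv ^^ K) h holomorphic_on UNIV"
        by (rule holomorphic_higher_deriv[OF Suc.prems(1)]) auto
      show "norm (deriv ((deriv ^^ K) h) (x + of_real t + of_real u)) \<le> B"
        if "0 \<le> u" "u \<le> 1" for u
        using Suc.prems(2)[of "t + u"] t that by (simp add: add.assoc)
    qed
    then show "norm ((deriv ^^ K) (fwd_diff h) (x + of_real t)) \<le> B"
      by (simp add: higher_deriv_fwd_diff[OF Suc.prems(1)])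
  qed
  then show ?case by (simp only: funpow_Suc_right o_def)
qed

section \<open>Terms of the theta series in a Stolz angle\<close>

definition theta_term :: "nat \<Rightarrow> real \<Rightarrow> complex \<Rightarrow> complex \<Rightarrow> complex" where
  "theta_term \<nu> c w \<zeta> = \<zeta> ^ \<nu> * exp (\<i> * of_real c * \<zeta>\<^sup>2 * w)"

lemma holomorphic_theta_term [holomorphic_intros]: "theta_term \<nu> c w holomorphic_on S"
  unfolding theta_term_def by (intro holomorphic_intros)

text \<open>The radius \<open>y / (3 (C + 1))\<close> is small enough that the disc around the real point \<open>y\<close>
  is mapped by \<open>\<zeta> \<mapsto> \<zeta>\<^sup>2 w\<close> into the closed upper half plane.\<close>

lemma Im_square_mult_nonneg:
  fixes y C :: real and u w :: complex
  assumes y: "0 < y" and C: "0 < C" and w: "0 \<le> Im w" "\<bar>Re w\<bar> \<le> C * Im w"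
    and u: "norm u \<le> y / (3 * (C + 1))"
  shows "0 \<le> Im ((of_real y + u)\<^sup>2 * w)"
proof -
  define d where "d = 1 / (3 * (C + 1))"
  have d: "0 < d" "d \<le> 1" "3 * d * (C + 1) = 1" using C by (auto simp: d_def field_simps)
  define a where "a = norm u"
  have a: "0 \<le> a" "a \<le> d * y" using u by (auto simp: a_def d_def)
  have eq: "(of_real y + u)\<^sup>2 * w = of_real (y\<^sup>2) * w + (2 * of_real y * u + u\<^sup>2) * w"
    by (simp add: power2_eq_square algebra_simps)
  have "norm (2 * of_real y * u + u\<^sup>2) \<le> 2 * y * a + a\<^sup>2"
    using norm_triangle_ineq[of "2 * of_real y * u" "u\<^sup>2"] y
    by (simp add: a_def norm_mult norm_power)
  then have norm_cross: "norm ((2 * of_real y * u + u\<^sup>2) * w) \<le> (2 * y * a + a\<^sup>2) * norm w"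
    by (simp add: norm_mult mult_right_mono)
  have norm_w: "norm w \<le> (C + 1) * Im w" using cmod_le[of w] w by (simp add: algebra_simps)
  have "(d * y)\<^sup>2 \<le> d * y\<^sup>2" using d y
    by (simp add: power2_eq_square mult_right_mono mult_left_mono mult.assoc)
  then have cross_le: "2 * y * a + a\<^sup>2 \<le> 3 * d * y\<^sup>2"
  proof -
    have "2 * y * a + a\<^sup>2 \<le> 2 * y * (d * y) + (d * y)\<^sup>2"
      using a y by (intro add_mono mult_left_mono power_mono) auto
    also have "\<dots> \<le> 2 * y * (d * y) + d * y\<^sup>2" using \<open>(d * y)\<^sup>2 \<le> d * y\<^sup>2\<close> by simp
    finally show ?thesis by (simp add: power2_eq_square algebra_simps)
  qed
  have "(2 * y * a + a\<^sup>2) * norm w \<le> (3 * d * y\<^sup>2) * ((C + 1) * Im w)"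
    using norm_w cross_le a y d by (intro mult_mono) auto
  also have "\<dots> = (3 * d * (C + 1)) * (y\<^sup>2 * Im w)" by (simp add: algebra_simps)
  also have "\<dots> = y\<^sup>2 * Im w" using d(3) by simp
  finally have "\<bar>Im ((2 * of_real y * u + u\<^sup>2) * w)\<bar> \<le> y\<^sup>2 * Im w"
    using abs_Im_le_cmod[of "(2 * of_real y * u + u\<^sup>2) * w"] norm_cross by linarith
  then show ?thesis unfolding eq by simp
qed

lemma norm_higher_deriv_theta_term_le:
  fixes y C c :: real and w :: complex
  assumes y: "0 < y" and C: "0 < C" and w: "0 \<le> Im w" "\<bar>Re w\<bar> \<le> C * Im w" and c: "0 \<le> c"
  shows "norm ((deriv ^^ K) (theta_term \<nu> c w) (of_real y))
           \<le> fact K * (2 * y) ^ \<nu> / (y / (3 * (C + 1))) ^ K"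
proof (rule Cauchy_inequality)
  let ?r = "y / (3 * (C + 1))"
  show "theta_term \<nu> c w holomorphic_on ball (of_real y) ?r" by (intro holomorphic_intros)
  show "continuous_on (cball (of_real y) ?r) (theta_term \<nu> c w)"
    by (intro holomorphic_on_imp_continuous_on holomorphic_intros)
  show "0 < ?r" using y C by simp
  fix x :: complex assume x: "norm (of_real y - x) = ?r"
  define u where "u = x - of_real y"
  have xu: "x = of_real y + u" by (simp add: u_def)
  have nu: "norm u \<le> ?r" using x by (simp add: u_def norm_minus_commute)
  have "?r \<le> y" using y C by (simp add: field_simps)
  moreover have "norm x \<le> norm (of_real y :: complex) + norm u"
    using norm_triangle_ineq[of "of_real y" u] by (simp add: xu)
  ultimately have nx: "norm x \<le> 2 * y" using nu y by simp
  have "norm (exp (\<i> * of_real c * x\<^sup>2 * w)) = exp (- (c * Im (x\<^sup>2 * w)))"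
    by (simp add: norm_exp_eq_Re mult.assoc)
  also have "\<dots> \<le> 1"
    using Im_square_mult_nonneg[OF y C w nu] c unfolding xu by simp
  finally have "norm (exp (\<i> * of_real c * x\<^sup>2 * w)) \<le> 1" .
  moreover have "norm (x ^ \<nu>) \<le> (2 * y) ^ \<nu>"
    unfolding norm_power by (intro power_mono nx) simp
  ultimately show "norm (theta_term \<nu> c w x) \<le> (2 * y) ^ \<nu>"
    unfolding theta_term_def norm_mult using mult_mono[of "norm (x ^ \<nu>)" "(2 * y) ^ \<nu>" _ 1] y
    by simp
qed

lemma norm_fwd_diff_theta_term_le:
  fixes C c :: real and w :: complex
  assumes C: "0 < C" and w: "0 \<le> Im w" "\<bar>Re w\<bar> \<le> C * Im w" and c: "0 \<le> c"
  shows "norm ((fwd_diff ^^ (\<nu> + 2)) (\<lambda>n. theta_term \<nu> c w (of_nat (Suc n))) n)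
         \<le> fact (\<nu> + 2) * 2 ^ \<nu> * (3 * (C + 1)) ^ (\<nu> + 2) / (real (Suc n))\<^sup>2"
  unfolding fwd_diff_funpow_of_nat_Suc
proof (rule norm_fwd_diff_funpow_le)
  show "theta_term \<nu> c w holomorphic_on UNIV" by (intro holomorphic_intros)
  fix t :: real assume t: "0 \<le> t" "t \<le> real (\<nu> + 2)"
  define D where "D = 3 * (C + 1)"
  define y where "y = real (Suc n) + t"
  have y: "0 < y" "real (Suc n) \<le> y" using t by (auto simp: y_def)
  have D: "0 < D" using C by (simp add: D_def)
  have "norm ((deriv ^^ (\<nu> + 2)) (theta_term \<nu> c w) (of_real y))
      \<le> fact (\<nu> + 2) * (2 * y) ^ \<nu> / (y / D) ^ (\<nu> + 2)"
    unfolding D_def by (rule norm_higher_deriv_theta_term_le[OF y(1) C w c])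
  also have "\<dots> = fact (\<nu> + 2) * 2 ^ \<nu> * D ^ (\<nu> + 2) / y\<^sup>2"
    using y D by (simp add: power_mult_distrib power_divide power_add power2_eq_square field_simps)
  also have "\<dots> \<le> fact (\<nu> + 2) * 2 ^ \<nu> * D ^ (\<nu> + 2) / (real (Suc n))\<^sup>2"
    using y D by (intro divide_left_mono power_mono mult_pos_pos) auto
  finally show "norm ((deriv ^^ (\<nu> + 2)) (theta_term \<nu> c w) (of_nat (Suc n) + of_real t))
      \<le> fact (\<nu> + 2) * 2 ^ \<nu> * (3 * (C + 1)) ^ (\<nu> + 2) / (real (Suc n))\<^sup>2"
    by (simp add: y_def D_def)
qed

lemma power_div_fact_le_exp:
  fixes x :: real
  assumes "0 \<le> x"
  shows "x ^ k / fact k \<le> exp x"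
proof -
  have "(\<Sum>n\<in>{k}. x ^ n /\<^sub>R fact n) \<le> (\<Sum>n. x ^ n /\<^sub>R fact n)"
    by (rule sum_le_suminf[OF summable_exp_generic]) (use assms in auto)
  then show ?thesis by (simp add: exp_def divide_inverse_commute)
qed

lemma summable_norm_theta_term:
  fixes c :: real and w :: complex
  assumes "0 < c" "0 < Im w"
  shows "summable (\<lambda>n. norm (theta_term \<nu> c w (of_nat (Suc n))))"
proof (rule summable_comparison_test'[where N = 0])
  define a where "a = c * Im w"
  have a: "0 < a" using assms by (simp add: a_def)
  define M where "M = fact (\<nu> + 2) / a ^ (\<nu> + 2)"
  show "summable (\<lambda>n. M * (1 / (real n + 1)\<^sup>2))"
    using sums_summable[OF inverse_squares_sums] by (intro summable_mult) (simp add: add.commute)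
  fix n
  define m where "m = real (Suc n)"
  have m: "1 \<le> m" by (simp add: m_def)
  have "norm (theta_term \<nu> c w (of_nat (Suc n))) = m ^ \<nu> * exp (- (a * m\<^sup>2))"
    by (simp add: theta_term_def norm_mult norm_power norm_exp_eq_Re m_def a_def mult.assoc
        flip: of_nat_Suc)
  also have "exp (- (a * m\<^sup>2)) \<le> 1 / exp (a * m)"
    using a m by (simp add: power2_eq_square exp_minus field_simps)
  also have "\<dots> \<le> 1 / ((a * m) ^ (\<nu> + 2) / fact (\<nu> + 2))"
    using a m by (intro divide_left_mono power_div_fact_le_exp mult_pos_pos divide_pos_pos) auto
  also have "m ^ \<nu> * (1 / ((a * m) ^ (\<nu> + 2) / fact (\<nu> + 2))) = M * (1 / m\<^sup>2)"
    using a m by (simp add: M_def power_mult_distrib power_add power2_eq_square field_simps)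
  finally show "norm (norm (theta_term \<nu> c w (of_nat (Suc n)))) \<le> M * (1 / (real n + 1)\<^sup>2)"
    using m by (simp add: m_def mult_left_mono add.commute)
qed

lemma tendsto_fwd_diff_funpow:
  fixes \<Psi> :: "'a \<Rightarrow> nat \<Rightarrow> 'b::topological_ab_group_add"
  assumes "\<And>n. ((\<lambda>\<tau>. \<Psi> \<tau> n) \<longlongrightarrow> \<Psi>0 n) F"
  shows "((\<lambda>\<tau>. (fwd_diff ^^ k) (\<Psi> \<tau>) n) \<longlongrightarrow> (fwd_diff ^^ k) \<Psi>0 n) F"
proof (induction k arbitrary: n)
  case (Suc k)
  show ?case using tendsto_diff[OF Suc[of "Suc n"] Suc[of n]] by (simp add: fwd_diff_def)
qed (simp add: assms)

lemma tendsto_fwd_diff_theta_series_stolz: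
  fixes fK :: "nat \<Rightarrow> complex" and c C \<alpha> :: real and \<nu> :: nat
  assumes fK: "\<And>n. norm (fK n) \<le> B" and C: "0 < C" and c: "0 \<le> c"
  defines "R \<equiv> \<lambda>\<tau>. \<Sum>n. fK n * (fwd_diff ^^ (\<nu> + 2)) (\<lambda>n. theta_term \<nu> c (\<tau> - of_real \<alpha>) (of_nat (Suc n))) n"
  shows "(R \<longlongrightarrow> R (of_real \<alpha>)) (at (of_real \<alpha>) within stolz \<alpha> C)"
proof -
  define \<psi> where "\<psi> \<tau> = (\<lambda>n. theta_term \<nu> c (\<tau> - of_real \<alpha>) (of_nat (Suc n)))" for \<tau>
  define D where "D = fact (\<nu> + 2) * 2 ^ \<nu> * (3 * (C + 1)) ^ (\<nu> + 2)"
  define M where "M = B * D"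
  have B: "0 \<le> B" using fK[of 0] norm_ge_zero order_trans by blast
  have bound: "norm (fK n * (fwd_diff ^^ (\<nu> + 2)) (\<psi> \<tau>) n) \<le> M * (1 / (real n + 1)\<^sup>2)"
    if "\<tau> \<in> insert (of_real \<alpha>) (stolz \<alpha> C)" for \<tau> n
  proof -
    have "0 \<le> Im (\<tau> - of_real \<alpha>)" "\<bar>Re (\<tau> - of_real \<alpha>)\<bar> \<le> C * Im (\<tau> - of_real \<alpha>)"
      using that by (auto simp: stolz_def)
    from norm_fwd_diff_theta_term_le[OF C this c, of \<nu> n]
    have "norm ((fwd_diff ^^ (\<nu> + 2)) (\<psi> \<tau>) n) \<le> D / (real n + 1)\<^sup>2"
      by (simp add: \<psi>_def D_def add.commute)
    then have "norm (fK n) * norm ((fwd_diff ^^ (\<nu> + 2)) (\<psi> \<tau>) n) \<le> B * (D / (real n + 1)\<^sup>2)"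
      using fK B by (intro mult_mono) auto
    then show ?thesis by (simp add: norm_mult M_def)
  qed
  have summable_M: "summable (\<lambda>n. M * (1 / (real n + 1)\<^sup>2))"
    using sums_summable[OF inverse_squares_sums] by (intro summable_mult) (simp add: add.commute)
  have tendsto_terms: "((\<lambda>\<tau>. \<Sum>i<N. fK i * (fwd_diff ^^ (\<nu> + 2)) (\<psi> \<tau>) i)
      \<longlongrightarrow> (\<Sum>i<N. fK i * (fwd_diff ^^ (\<nu> + 2)) (\<psi> (of_real \<alpha>)) i)) (at (of_real \<alpha>) within stolz \<alpha> C)"
    for N
    unfolding \<psi>_def theta_term_def
    by (intro tendsto_sum tendsto_mult_left tendsto_fwd_diff_funpow tendsto_intros)
  have "((\<lambda>\<tau>. \<Sum>n. fK n * (fwd_diff ^^ (\<nu> + 2)) (\<psi> \<tau>) n)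
      \<longlongrightarrow> (\<Sum>n. fK n * (fwd_diff ^^ (\<nu> + 2)) (\<psi> (of_real \<alpha>)) n)) (at (of_real \<alpha>) within stolz \<alpha> C)"
  proof (rule swap_uniform_limit[OF always_eventually[OF allI[OF tendsto_terms]]])
    show "(\<lambda>N. \<Sum>i<N. fK i * (fwd_diff ^^ (\<nu> + 2)) (\<psi> (of_real \<alpha>)) i)
        \<longlonglongrightarrow> (\<Sum>n. fK n * (fwd_diff ^^ (\<nu> + 2)) (\<psi> (of_real \<alpha>)) n)"
    proof (rule summable_LIMSEQ, rule summable_norm_cancel)
      show "summable (\<lambda>n. norm (fK n * (fwd_diff ^^ (\<nu> + 2)) (\<psi> (of_real \<alpha>)) n))"
        by (rule summable_comparison_test'[OF summable_M, where N = 0]) (use bound in auto)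
    qed
    show "uniform_limit (stolz \<alpha> C) (\<lambda>N \<tau>. \<Sum>i<N. fK i * (fwd_diff ^^ (\<nu> + 2)) (\<psi> \<tau>) i)
        (\<lambda>\<tau>. \<Sum>n. fK n * (fwd_diff ^^ (\<nu> + 2)) (\<psi> \<tau>) n) sequentially"
      by (rule Weierstrass_m_test[OF _ summable_M]) (use bound in auto)
  qed simp
  then show ?thesis by (simp add: R_def \<psi>_def)
qed

text \<open>Summation by parts \<open>\<nu> + 2\<close> times leaves finitely many terms continuous in \<open>\<tau>\<close> and a
  series that converges uniformly on the Stolz angle.\<close>

lemma theta_series_nontangential_limit:
  fixes f :: "nat \<Rightarrow> complex" and c \<alpha> :: real
  assumes f: "zero_sum_periodic T f" and c: "0 < c"
  shows "\<exists>L. \<forall>C>0. ((\<lambda>\<tau>. \<Sum>n. f n * theta_term \<nu> c (\<tau> - of_real \<alpha>) (of_nat (Suc n)))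
            \<longlongrightarrow> L) (at (of_real \<alpha>) within stolz \<alpha> C)"
proof -
  define K where "K = \<nu> + 2"
  define \<psi> where "\<psi> \<tau> = (\<lambda>n. theta_term \<nu> c (\<tau> - of_real \<alpha>) (of_nat (Suc n)))" for \<tau>
  obtain b fK where fK: "zero_sum_periodic T fK"
    and parts: "\<And>\<phi>. summable (\<lambda>n. norm (\<phi> n)) \<Longrightarrow>
        (\<Sum>n. f n * \<phi> n) = (\<Sum>k<K. b k * (fwd_diff ^^ k) \<phi> 0) + (\<Sum>n. fK n * (fwd_diff ^^ K) \<phi> n)"
    by (rule summation_by_parts[OF f]) blast
  obtain B where B: "\<And>n. norm (fK n) \<le> B"
    by (rule zero_sum_periodic_bounded[OF fK]) blast
  define R where "R \<tau> = (\<Sum>k<K. b k * (fwd_diff ^^ k) (\<psi> \<tau>) 0) + (\<Sum>n. fK n * (fwd_diff ^^ K) (\<psi> \<tau>) n)"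
    for \<tau>
  have "((\<lambda>\<tau>. \<Sum>n. f n * \<psi> \<tau> n) \<longlongrightarrow> R (of_real \<alpha>)) (at (of_real \<alpha>) within stolz \<alpha> C)"
    if C: "0 < C" for C
  proof -
    have "((\<lambda>\<tau>. \<Sum>k<K. b k * (fwd_diff ^^ k) (\<psi> \<tau>) 0)
        \<longlongrightarrow> (\<Sum>k<K. b k * (fwd_diff ^^ k) (\<psi> (of_real \<alpha>)) 0)) (at (of_real \<alpha>) within stolz \<alpha> C)"
      unfolding \<psi>_def theta_term_def
      by (intro tendsto_sum tendsto_mult_left tendsto_fwd_diff_funpow tendsto_intros)
    then have lim: "(R \<longlongrightarrow> R (of_real \<alpha>)) (at (of_real \<alpha>) within stolz \<alpha> C)"
      unfolding R_def K_def \<psi>_def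
      using tendsto_fwd_diff_theta_series_stolz[OF B C less_imp_le[OF c]] by (intro tendsto_add)
    have "(\<Sum>n. f n * \<psi> \<tau> n) = R \<tau>" if "\<tau> \<in> stolz \<alpha> C" for \<tau>
    proof -
      have "0 < Im (\<tau> - of_real \<alpha>)" using that by (simp add: stolz_def)
      then have "summable (\<lambda>n. norm (\<psi> \<tau> n))"
        unfolding \<psi>_def by (rule summable_norm_theta_term[OF c])
      then show ?thesis unfolding R_def by (rule parts)
    qed
    then have "\<forall>\<^sub>F \<tau> in at (of_real \<alpha>) within stolz \<alpha> C. R \<tau> = (\<Sum>n. f n * \<psi> \<tau> n)"
      by (auto simp: eventually_at_filter)
    from tendsto_cong[OF this] lim show ?thesis by simp
  qed
  then show ?thesis unfolding \<psi>_def by blast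
qed

definition quad_phase :: "real \<Rightarrow> real \<Rightarrow> int \<Rightarrow> complex" where
  "quad_phase \<alpha> M m = exp (\<i> * of_real (pi * of_int (m\<^sup>2) * \<alpha> / M))"

lemma Theta_eq_theta_series:
  "Theta \<tau> \<nu> g M = (\<Sum>n. (g (int (Suc n)) * quad_phase \<alpha> M (int (Suc n)))
                        * theta_term \<nu> (pi / M) (\<tau> - of_real \<alpha>) (of_nat (Suc n)))"
  unfolding Theta_def
proof (rule suminf_cong)
  fix n
  have "\<i> * pi * of_nat (Suc n) ^ 2 * \<tau> / of_real M
      = \<i> * of_real (pi * of_int ((int (Suc n))\<^sup>2) * \<alpha> / M)
        + \<i> * of_real (pi / M) * (of_nat (Suc n))\<^sup>2 * (\<tau> - of_real \<alpha>)"
    by (cases "M = 0") (simp_all add: field_simps)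
  then show "of_nat (Suc n) ^ \<nu> * g (int (Suc n)) * exp (\<i> * pi * of_nat (Suc n) ^ 2 * \<tau> / of_real M)
      = (g (int (Suc n)) * quad_phase \<alpha> M (int (Suc n)))
        * theta_term \<nu> (pi / M) (\<tau> - of_real \<alpha>) (of_nat (Suc n))"
    by (simp add: quad_phase_def theta_term_def exp_add ac_simps)
qed

lemma Theta_nontangential_limit:
  assumes "0 < M" "zero_sum_periodic T (\<lambda>n. g (int (Suc n)) * quad_phase \<alpha> M (int (Suc n)))"
  shows "nontangential_limit_exists (\<lambda>\<tau>. Theta \<tau> \<nu> g M) \<alpha>"
  unfolding nontangential_limit_exists_def Theta_eq_theta_series[where \<alpha> = \<alpha>]
  using theta_series_nontangential_limit[OF assms(2), of "pi / M"] assms(1) by simp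

section \<open>The generators \<open>g\<^sub>J\<^sup>l\<close>\<close>

definition Phat :: "nat \<Rightarrow> (nat \<Rightarrow> int) \<Rightarrow> nat \<Rightarrow> int" where
  "Phat r p j = (\<Prod>i\<in>{1..r} - {j}. p i)"

lemma Pprod_eq_mult_Phat: "j \<in> {1..r} \<Longrightarrow> Pprod r p = p j * Phat r p j"
  unfolding Pprod_def Phat_def by (simp add: prod.remove)

lemma dvd_Phat: "i \<in> {1..r} \<Longrightarrow> i \<noteq> j \<Longrightarrow> p i dvd Phat r p j"
  unfolding Phat_def by (intro dvd_prodI) auto

lemma signs_cases: "\<epsilon> \<in> signs r \<Longrightarrow> k \<in> {1..r} \<Longrightarrow> \<epsilon> k = 1 \<or> \<epsilon> k = -1"
  by (auto simp: signs_def)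

lemma signs_flip: "\<epsilon> \<in> signs r \<Longrightarrow> j \<in> {1..r} \<Longrightarrow> \<epsilon>(j := - \<epsilon> j) \<in> signs r"
  by (auto simp: signs_def)

lemma gJ_cong:
  assumes "[n = n'] (mod (2 * Pprod r p))"
  shows "gJ r p J l n = gJ r p J l n'"
proof -
  have "[n = x] (mod (2 * Pprod r p)) \<longleftrightarrow> [n' = x] (mod (2 * Pprod r p))" for x
    using assms by (meson cong_sym cong_trans)
  then show ?thesis unfolding gJ_def by presburger
qed

lemma Vspace_cong:
  assumes "g \<in> Vspace r p s" "[n = n'] (mod (2 * Pprod r p))"
  shows "g n = g n'"
proof -
  obtain S c where S: "S \<subseteq> genV r p s" and g: "g = (\<lambda>n. \<Sum>\<phi>\<in>S. c \<phi> * \<phi> n)"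
    using assms(1) unfolding Vspace_def by blast
  have "\<phi> n = \<phi> n'" if \<phi>: "\<phi> \<in> S" for \<phi>
  proof -
    obtain J l where "\<phi> = gJ r p J l" using \<phi> S unfolding genV_def by blast
    then show ?thesis using gJ_cong[OF assms(2)] by simp
  qed
  then show ?thesis unfolding g by (intro sum.cong) auto
qed

locale coprime_moduli =
  fixes r :: nat and p :: "nat \<Rightarrow> int"
  assumes pos: "\<forall>j\<in>{1..r}. 0 < p j"
    and pairwise_coprime: "\<forall>i\<in>{1..r}. \<forall>j\<in>{1..r}. i \<noteq> j \<longrightarrow> coprime (p i) (p j)"
    and odd: "\<forall>j\<in>{2..r}. odd (p j)"
begin

lemma Pprod_pos: "0 < Pprod r p"
  unfolding Pprod_def using pos by (intro prod_pos) auto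

lemma Phat_pos: "0 < Phat r p j"
  unfolding Phat_def using pos by (intro prod_pos) auto

lemma Pprod_div:
  assumes "j \<in> {1..r}"
  shows "Pprod r p div p j = Phat r p j"
proof -
  have "p j \<noteq> 0" using pos assms by fastforce
  then show ?thesis using Pprod_eq_mult_Phat[OF assms, of p] by simp
qed

lemma coprime_Phat: "j \<in> {1..r} \<Longrightarrow> coprime (p j) (Phat r p j)"
  unfolding Phat_def using pairwise_coprime by (intro prod_coprime_right) auto

lemma Nval_diff:
  "Nval r p l \<epsilon> - Nval r p l \<delta> = (\<Sum>k\<in>{1..r}. (\<epsilon> k - \<delta> k) * (l k * Phat r p k))"
proof -
  have "Nval r p l \<epsilon> - Nval r p l \<delta>
      = (\<Sum>k\<in>{1..r}. \<epsilon> k * l k * (Pprod r p div p k) - \<delta> k * l k * (Pprod r p div p k))"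
    unfolding Nval_def by (simp add: sum_subtractf)
  also have "\<dots> = (\<Sum>k\<in>{1..r}. (\<epsilon> k - \<delta> k) * (l k * Phat r p k))"
    by (intro sum.cong) (simp_all add: Pprod_div algebra_simps)
  finally show ?thesis .
qed

lemma Nval_flip:
  assumes j: "j \<in> {1..r}"
  shows "Nval r p l (\<epsilon>(j := - \<epsilon> j)) = Nval r p l \<epsilon> - 2 * (\<epsilon> j * l j * Phat r p j)"
proof -
  have "(\<lambda>k. ((\<epsilon>(j := - \<epsilon> j)) k - \<epsilon> k) * (l k * Phat r p k))
      = (\<lambda>k. if k = j then - 2 * (\<epsilon> j * l j * Phat r p j) else 0)"
    by (auto simp: fun_eq_iff)
  then have "Nval r p l (\<epsilon>(j := - \<epsilon> j)) - Nval r p l \<epsilon>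
      = (\<Sum>k\<in>{1..r}. if k = j then - 2 * (\<epsilon> j * l j * Phat r p j) else 0)"
    by (simp only: Nval_diff)
  also have "\<dots> = - 2 * (\<epsilon> j * l j * Phat r p j)" using j by simp
  finally show ?thesis by linarith
qed

lemma Nval_cong_mod_p:
  assumes j: "j \<in> {1..r}"
  shows "[Nval r p l \<epsilon> = \<epsilon> j * l j * Phat r p j] (mod p j)"
proof -
  have "Nval r p l \<epsilon> = Pprod r p + \<epsilon> j * l j * Phat r p j
      + (\<Sum>i\<in>{1..r} - {j}. \<epsilon> i * l i * (Pprod r p div p i))"
    using sum.remove[OF _ j, of "\<lambda>i. \<epsilon> i * l i * (Pprod r p div p i)"] Pprod_div[OF j]
    by (simp add: Nval_def)
  moreover have "p j dvd (\<Sum>i\<in>{1..r} - {j}. \<epsilon> i * l i * (Pprod r p div p i))"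
    using j dvd_Phat[of j r _ p] by (intro dvd_sum) (auto simp: Pprod_div)
  ultimately show ?thesis
    by (simp add: cong_iff_dvd_diff Pprod_eq_mult_Phat[OF j])
qed

lemma signs_eq_at_odd:
  assumes k: "k \<in> {1..r}" and odd_k: "odd (p k)" and ndvd: "\<not> p k dvd l k"
    and \<epsilon>: "\<epsilon> \<in> signs r" and \<delta>: "\<delta> \<in> signs r"
    and cong: "[Nval r p l \<epsilon> = Nval r p l \<delta>] (mod (2 * Pprod r p))"
  shows "\<epsilon> k = \<delta> k"
proof (rule ccontr)
  assume ne: "\<epsilon> k \<noteq> \<delta> k"
  have "[Nval r p l \<epsilon> = Nval r p l \<delta>] (mod p k)"
    using cong by (rule cong_dvd_modulus) (simp add: Pprod_eq_mult_Phat[OF k])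
  then have "[\<epsilon> k * l k * Phat r p k = \<delta> k * l k * Phat r p k] (mod p k)"
    using Nval_cong_mod_p[OF k, of l \<epsilon>] Nval_cong_mod_p[OF k, of l \<delta>]
    by (metis cong_sym cong_trans)
  then have "p k dvd (\<epsilon> k - \<delta> k) * (l k * Phat r p k)"
    by (simp add: cong_iff_dvd_diff algebra_simps)
  moreover have "\<epsilon> k - \<delta> k = 2 \<or> \<epsilon> k - \<delta> k = -2"
    using signs_cases[OF \<epsilon> k] signs_cases[OF \<delta> k] ne by auto
  ultimately have "p k dvd 2 * (l k * Phat r p k)" by auto
  then have "p k dvd l k * Phat r p k"
    using odd_k by (simp add: coprime_dvd_mult_right_iff)
  then have "p k dvd l k"
    using coprime_Phat[OF k] by (simp add: coprime_dvd_mult_left_iff)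
  with ndvd show False by simp
qed

text \<open>A sign change at an index \<open>i \<ge> 2\<close> forces \<open>p\<^sub>i dvd l\<^sub>i\<close>, hence \<open>l\<^sub>i \<in> {0, p\<^sub>i}\<close>, so it
  changes \<open>N(\<epsilon>)\<close> by a multiple of \<open>2 P\<close>; this settles the index \<open>1\<close>, where \<open>p\<^sub>1\<close> may be even.\<close>

lemma Nval_diff_term_dvd:
  assumes l: "l \<in> setL r p" and i: "i \<in> {2..r}" and \<epsilon>: "\<epsilon> \<in> signs r" and \<delta>: "\<delta> \<in> signs r"
    and cong: "[Nval r p l \<epsilon> = Nval r p l \<delta>] (mod (2 * Pprod r p))"
  shows "2 * Pprod r p dvd (\<epsilon> i - \<delta> i) * (l i * Phat r p i)"
proof (cases "\<epsilon> i = \<delta> i")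
  case False
  have i1: "i \<in> {1..r}" using i by auto
  have "p i dvd l i"
    using signs_eq_at_odd[OF i1 _ _ \<epsilon> \<delta> cong] odd i False by auto
  moreover have "0 \<le> l i" "l i \<le> p i" using l i1 by (auto simp: setL_def setH_def)
  ultimately have "l i = 0 \<or> l i = p i"
    using zdvd_imp_le[of "p i" "l i"] by (cases "l i = 0") auto
  moreover have "\<epsilon> i - \<delta> i = 2 \<or> \<epsilon> i - \<delta> i = -2"
    using signs_cases[OF \<epsilon> i1] signs_cases[OF \<delta> i1] False by auto
  ultimately have "(\<epsilon> i - \<delta> i) * (l i * Phat r p i) \<in> {0, 2 * Pprod r p, - (2 * Pprod r p)}"
    unfolding Pprod_eq_mult_Phat[OF i1, of p] by auto
  then show ?thesis by auto
qed simp

lemma signs_eq: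
  assumes l: "l \<in> setL r p" and k: "k \<in> {1..r}" and ndvd: "\<not> p k dvd l k"
    and \<epsilon>: "\<epsilon> \<in> signs r" and \<delta>: "\<delta> \<in> signs r"
    and cong: "[Nval r p l \<epsilon> = Nval r p l \<delta>] (mod (2 * Pprod r p))"
  shows "\<epsilon> k = \<delta> k"
proof (cases "k = 1")
  case False
  then show ?thesis using signs_eq_at_odd[OF k _ ndvd \<epsilon> \<delta> cong] odd k by auto
next
  case True
  show ?thesis
  proof (rule ccontr)
    assume ne: "\<epsilon> k \<noteq> \<delta> k"
    define t where "t i = (\<epsilon> i - \<delta> i) * (l i * Phat r p i)" for i
    have "2 * Pprod r p dvd (\<Sum>i\<in>{1..r}. t i)"
      using cong unfolding cong_iff_dvd_diff Nval_diff t_def .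
    moreover have "2 * Pprod r p dvd (\<Sum>i\<in>{1..r} - {1}. t i)"
      using Nval_diff_term_dvd[OF l _ \<epsilon> \<delta> cong] by (intro dvd_sum) (auto simp: t_def)
    ultimately have "2 * Pprod r p dvd t 1"
      using sum.remove[OF _ k[unfolded True], of t] by (simp add: dvd_add_left_iff)
    moreover have "\<epsilon> 1 - \<delta> 1 = 2 \<or> \<epsilon> 1 - \<delta> 1 = -2"
      using signs_cases[OF \<epsilon> k] signs_cases[OF \<delta> k] ne True by auto
    ultimately have "2 * Pprod r p dvd 2 * (l 1 * Phat r p 1)" by (auto simp: t_def)
    then have "p 1 * Phat r p 1 dvd l 1 * Phat r p 1"
      using Pprod_eq_mult_Phat[OF k[unfolded True], of p] by simp
    then have "p 1 dvd l 1" using Phat_pos[of 1] by simp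
    then show False using ndvd True by simp
  qed
qed

lemma gJ_eq_prod_signs:
  assumes l: "l \<in> setL r p" and J: "J \<subseteq> {1..r}" "J \<inter> Jset r p l = {}"
    and \<epsilon>: "\<epsilon> \<in> signs r" and cong: "[n = Nval r p l \<epsilon>] (mod (2 * Pprod r p))"
  shows "gJ r p J l n = of_int (\<Prod>i\<in>J. \<epsilon> i)"
proof -
  define Q where "Q \<delta> \<longleftrightarrow> \<delta> \<in> signs r \<and> [n = Nval r p l \<delta>] (mod (2 * Pprod r p))" for \<delta>
  have "Q \<epsilon>" using \<epsilon> cong by (simp add: Q_def)
  then have "Q (SOME \<delta>. Q \<delta>)" by (rule someI[of Q \<epsilon>])
  then have some: "(SOME \<delta>. Q \<delta>) \<in> signs r"
    "[Nval r p l (SOME \<delta>. Q \<delta>) = Nval r p l \<epsilon>] (mod (2 * Pprod r p))"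
    using cong unfolding Q_def by (auto intro: cong_trans cong_sym)
  have "(SOME \<delta>. Q \<delta>) i = \<epsilon> i" if "i \<in> J" for i
  proof (rule signs_eq[OF l _ _ some(1) \<epsilon> some(2)])
    show "i \<in> {1..r}" "\<not> p i dvd l i" using that J unfolding Jset_def by blast+
  qed
  then have "(\<Prod>i\<in>J. (SOME \<delta>. Q \<delta>) i) = (\<Prod>i\<in>J. \<epsilon> i)" by (rule prod.cong[OF refl])
  moreover have "\<exists>\<delta>\<in>signs r. [n = Nval r p l \<delta>] (mod (2 * Pprod r p))" using \<epsilon> cong by blast
  ultimately show ?thesis unfolding gJ_def Q_def by simp
qed

lemma Nval_flip_cong:
  assumes j: "j \<in> {1..r}" and odd_j: "odd (p j)"
    and cong: "[n = Nval r p l \<epsilon>] (mod (2 * Pprod r p))"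
    and cong_p: "[n' = - n] (mod p j)" and cong_Phat: "[n' = n] (mod (2 * Phat r p j))"
  shows "[n' = Nval r p l (\<epsilon>(j := - \<epsilon> j))] (mod (2 * Pprod r p))"
proof -
  have P: "2 * Pprod r p = p j * (2 * Phat r p j)" using Pprod_eq_mult_Phat[OF j] by simp
  have "[n' = Nval r p l (\<epsilon>(j := - \<epsilon> j))] (mod p j)"
  proof -
    have "[n = Nval r p l \<epsilon>] (mod p j)" using cong by (rule cong_dvd_modulus) (simp add: P)
    then have "[n = \<epsilon> j * l j * Phat r p j] (mod p j)"
      using Nval_cong_mod_p[OF j] by (rule cong_trans)
    then have "[n' = - (\<epsilon> j * l j * Phat r p j)] (mod p j)"
      using cong_p by (metis cong_minus_minus_iff cong_trans)
    moreover have "[Nval r p l (\<epsilon>(j := - \<epsilon> j)) = - (\<epsilon> j * l j * Phat r p j)] (mod p j)"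
      using Nval_cong_mod_p[OF j, of l "\<epsilon>(j := - \<epsilon> j)"] by simp
    ultimately show ?thesis by (metis cong_sym cong_trans)
  qed
  moreover have "[n' = Nval r p l (\<epsilon>(j := - \<epsilon> j))] (mod (2 * Phat r p j))"
  proof -
    have "[n = Nval r p l \<epsilon>] (mod (2 * Phat r p j))" using cong by (rule cong_dvd_modulus) (simp add: P)
    moreover have "[Nval r p l \<epsilon> = Nval r p l (\<epsilon>(j := - \<epsilon> j))] (mod (2 * Phat r p j))"
      unfolding Nval_flip[OF j] by (simp add: cong_iff_dvd_diff)
    ultimately show ?thesis using cong_Phat by (metis cong_trans)
  qed
  moreover have "coprime (p j) (2 * Phat r p j)" using odd_j coprime_Phat[OF j] by simp
  ultimately show ?thesis unfolding P by (rule coprime_cong_mult)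
qed

lemma gJ_flip:
  assumes l: "l \<in> setL r p" and J: "J \<subseteq> {1..r}" "J \<inter> Jset r p l = {}"
    and j: "j \<in> J" "2 \<le> j"
    and cong_p: "[n' = - n] (mod p j)" and cong_Phat: "[n' = n] (mod (2 * Phat r p j))"
  shows "gJ r p J l n' = - gJ r p J l n"
proof -
  have j1: "j \<in> {1..r}" using j J by auto
  have odd_j: "odd (p j)" using odd j1 j by auto
  have cong_p': "[n = - n'] (mod p j)" using cong_p by (simp add: cong_iff_dvd_diff add.commute)
  have cong_Phat': "[n = n'] (mod (2 * Phat r p j))" using cong_Phat by (rule cong_sym)
  show ?thesis
  proof (cases "\<exists>\<epsilon>\<in>signs r. [n = Nval r p l \<epsilon>] (mod (2 * Pprod r p))")
    case True
    then obtain \<epsilon> where \<epsilon>: "\<epsilon> \<in> signs r" and cong: "[n = Nval r p l \<epsilon>] (mod (2 * Pprod r p))"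
      by blast
    have "finite J" using J(1) finite_subset by blast
    have "(\<Prod>i\<in>J - {j}. (\<epsilon>(j := - \<epsilon> j)) i) = (\<Prod>i\<in>J - {j}. \<epsilon> i)"
      by (rule prod.cong) auto
    then have "(\<Prod>i\<in>J. (\<epsilon>(j := - \<epsilon> j)) i) = - (\<Prod>i\<in>J. \<epsilon> i)"
      using prod.remove[OF \<open>finite J\<close> j(1), of \<epsilon>] prod.remove[OF \<open>finite J\<close> j(1), of "\<epsilon>(j := - \<epsilon> j)"]
      by simp
    then show ?thesis
      using gJ_eq_prod_signs[OF l J \<epsilon> cong]
        gJ_eq_prod_signs[OF l J signs_flip[OF \<epsilon> j1] Nval_flip_cong[OF j1 odd_j cong cong_p cong_Phat]]
      by simp
  next
    case False
    have "\<not> (\<exists>\<delta>\<in>signs r. [n' = Nval r p l \<delta>] (mod (2 * Pprod r p)))"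
    proof
      assume "\<exists>\<delta>\<in>signs r. [n' = Nval r p l \<delta>] (mod (2 * Pprod r p))"
      then obtain \<delta> where "\<delta> \<in> signs r" "[n' = Nval r p l \<delta>] (mod (2 * Pprod r p))" by blast
      with Nval_flip_cong[OF j1 odd_j _ cong_p' cong_Phat'] signs_flip[OF _ j1] False
      show False by blast
    qed
    then show ?thesis using False by (simp add: gJ_def)
  qed
qed

end

section \<open>Vanishing of twisted sums over a period\<close>

lemma periodic_int_add_mult:
  fixes G :: "int \<Rightarrow> 'a"
  assumes "\<forall>m. G (m + M) = G m"
  shows "G (m + k * M) = G m"
proof -
  have nat: "G (m + int k' * M) = G m" for m k'
  proof (induction k')
    case (Suc k')
    have "G (m + int (Suc k') * M) = G ((m + int k' * M) + M)" by (simp add: algebra_simps)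
    then show ?case using assms Suc by simp
  qed simp
  show ?thesis
  proof (cases "0 \<le> k")
    case True
    then show ?thesis using nat[of m "nat k"] by simp
  next
    case False
    have "G ((m + k * M) + int (nat (- k)) * M) = G (m + k * M)" by (rule nat)
    then show ?thesis using False by (simp add: algebra_simps)
  qed
qed

lemma periodic_int_mod:
  fixes G :: "int \<Rightarrow> 'a"
  assumes "\<forall>m. G (m + M) = G m"
  shows "G (m mod M) = G m"
  using periodic_int_add_mult[OF assms, of "m mod M" "m div M"] by (simp add: mod_div_mult_eq)

text \<open>Multiplication by \<open>e\<close> permutes the residues modulo \<open>M\<close>, so the sum equals its own negative.\<close>

lemma sum_zero_if_negated_by_unit:
  fixes G :: "int \<Rightarrow> complex" and M e :: int
  assumes M: "0 < M" and per: "\<forall>m. G (m + M) = G m" and e: "[e * e = 1] (mod M)"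
    and neg: "\<And>m. G (e * m) = - G m"
  shows "(\<Sum>n<nat M. G (int n)) = 0"
proof -
  define \<sigma> where "\<sigma> n = nat ((e * int n) mod M)" for n
  have \<sigma>_range: "\<sigma> n \<in> {..<nat M}" for n using M by (simp add: \<sigma>_def)
  have \<sigma>_int: "int (\<sigma> n) = (e * int n) mod M" for n using M by (simp add: \<sigma>_def)
  have \<sigma>_inv: "\<sigma> (\<sigma> n) = n" if "n \<in> {..<nat M}" for n
  proof -
    have "(e * int (\<sigma> n)) mod M = ((e * e) * int n) mod M"
      unfolding \<sigma>_int by (simp add: mod_mult_right_eq mult.assoc)
    also have "\<dots> = (1 * int n) mod M" using e unfolding cong_def by (metis mod_mult_left_eq)
    also have "\<dots> = int n" using that M by simp
    finally show ?thesis by (simp add: \<sigma>_def)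
  qed
  have "(\<Sum>n<nat M. G (int n)) = (\<Sum>n<nat M. - G (int n))"
  proof (rule sum.reindex_bij_witness[of _ \<sigma> \<sigma>])
    fix n assume "n \<in> {..<nat M}"
    show "\<sigma> (\<sigma> n) = n" "\<sigma> n \<in> {..<nat M}" "\<sigma> (\<sigma> n) = n" "\<sigma> n \<in> {..<nat M}"
      using \<sigma>_inv[OF \<open>n \<in> _\<close>] \<sigma>_range by auto
    have "G (int (\<sigma> n)) = G (e * int n)" unfolding \<sigma>_int by (rule periodic_int_mod[OF per])
    then show "- G (int (\<sigma> n)) = G (int n)" using neg by simp
  qed
  then show ?thesis by (simp add: sum_negf)
qed

lemma coprime_factorization:
  fixes w u :: int
  assumes "0 < w"
  shows "\<exists>a c k. w = a * c \<and> 0 < a \<and> 0 < c \<and> coprime a u \<and> c dvd u ^ k"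
  using assms
proof (induction "nat w" arbitrary: w rule: less_induct)
  case less
  show ?case
  proof (cases "coprime w u")
    case True
    then show ?thesis using less.prems by (intro exI[of _ w] exI[of _ 1] exI[of _ 0]) auto
  next
    case False
    define d where "d = gcd w u"
    have "0 < d" "d \<noteq> 1"
      using less.prems False by (simp_all add: d_def coprime_iff_gcd_eq_1)
    then have "2 \<le> d" by simp
    obtain w' where w': "w = d * w'" unfolding d_def by (meson gcd_dvd1 dvd_def)
    have "0 < w'" using w' \<open>2 \<le> d\<close> less.prems by (simp add: zero_less_mult_iff)
    moreover have "w' < w" using w' \<open>2 \<le> d\<close> \<open>0 < w'\<close> mult_strict_right_mono[of 1 d w'] by simp
    ultimately have "nat w' < nat w" by simp
    then obtain a c k where ack: "w' = a * c" "0 < a" "0 < c" "coprime a u" "c dvd u ^ k"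
      using less.hyps \<open>0 < w'\<close> by blast
    have "d * c dvd u * u ^ k" using ack(5) by (intro mult_dvd_mono) (simp_all add: d_def)
    then show ?thesis using ack w' \<open>2 \<le> d\<close>
      by (intro exI[of _ a] exI[of _ "d * c"] exI[of _ "Suc k"]) (auto simp: ac_simps)
  qed
qed

text \<open>By the Chinese remainder theorem: write \<open>N = a c\<close> with \<open>a\<close> prime to \<open>u\<close> and \<open>c\<close> built from
  primes of \<open>u\<close>, and take \<open>e \<equiv> 1\<close> modulo \<open>a v\<close>, \<open>e \<equiv> -1\<close> modulo a power of \<open>u\<close>.\<close>

lemma exists_square_root_of_unity:
  fixes u v N :: int
  assumes uv: "coprime u v" and N: "0 < N"
  obtains e where "[e * e = 1] (mod N)" "u dvd e + 1" "v dvd e - 1"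
proof -
  obtain a c k where ack: "N = a * c" "0 < a" "0 < c" "coprime a u" "c dvd u ^ k"
    using coprime_factorization[OF N, of u] by blast
  define A where "A = a * v"
  define B where "B = u ^ Suc k"
  have "coprime A B" unfolding A_def B_def using ack(4) uv by (simp add: coprime_commute[of v u])
  then obtain x y where xy: "x * A + y * B = 1"
    using bezout_int[of A B] by (auto simp: coprime_iff_gcd_eq_1)
  define e where "e = y * B - x * A"
  have Ae: "e - 1 = A * (- 2 * x)" and Be: "e + 1 = B * (2 * y)"
    using xy by (simp_all add: e_def algebra_simps)
  show ?thesis
  proof (rule that[of e])
    have "c dvd B" using ack(5) unfolding B_def by (simp add: dvd_mult_right[of c "u ^ k" u] mult.commute)
    then have "N dvd A * B" unfolding ack(1) A_def by (intro mult_dvd_mono) simp_all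
    also have "A * B dvd (e - 1) * (e + 1)" unfolding Ae Be by (intro mult_dvd_mono) simp_all
    finally show "[e * e = 1] (mod N)" by (simp add: cong_iff_dvd_diff algebra_simps)
    show "u dvd e + 1" unfolding Be B_def by simp
    show "v dvd e - 1" unfolding Ae A_def by simp
  qed
qed

lemma quad_phase_square_cong:
  fixes P :: int
  assumes "\<alpha> \<in> \<rat>" "0 < P"
  obtains N where "0 < N" "2 * P dvd N"
    "\<And>m1 m2. [m1\<^sup>2 = m2\<^sup>2] (mod N) \<Longrightarrow> quad_phase \<alpha> (2 * of_int P) m1 = quad_phase \<alpha> (2 * of_int P) m2"
proof -
  obtain a b :: int where b: "0 < b" and \<alpha>: "\<alpha> = of_int a / of_int b"
    using Rats_cases'[OF assms(1)] by metis
  show ?thesis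
  proof (rule that[of "4 * P * b"])
    show "0 < 4 * P * b" using assms(2) b by simp
    show "2 * P dvd 4 * P * b" by (simp add: mult.assoc)
    fix m1 m2 :: int assume "[m1\<^sup>2 = m2\<^sup>2] (mod 4 * P * b)"
    then have "4 * P * b dvd m1\<^sup>2 - m2\<^sup>2" by (simp add: cong_iff_dvd_diff)
    then obtain t where "m1\<^sup>2 - m2\<^sup>2 = 4 * P * b * t" by (elim dvdE)
    then have t: "m1\<^sup>2 = m2\<^sup>2 + 4 * P * b * t" by simp
    have "pi * of_int (m1\<^sup>2) * \<alpha> / (2 * of_int P)
        = pi * of_int (m2\<^sup>2) * \<alpha> / (2 * of_int P) + 2 * pi * of_int (t * a)"
      using assms(2) b unfolding t \<alpha> of_int_add by (simp add: field_simps)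
    then have "\<i> * of_real (pi * of_int (m1\<^sup>2) * \<alpha> / (2 * of_int P))
        = \<i> * of_real (pi * of_int (m2\<^sup>2) * \<alpha> / (2 * of_int P)) + \<i> * (of_int (t * a) * (of_real pi * 2))"
      by (simp add: algebra_simps)
    then show "quad_phase \<alpha> (2 * of_int P) m1 = quad_phase \<alpha> (2 * of_int P) m2"
      unfolding quad_phase_def by (simp only: exp_plus_2pin)
  qed
qed

context coprime_moduli
begin

lemma gJ_twisted_sum_zero:
  fixes X :: "int \<Rightarrow> complex"
  assumes r: "3 \<le> r" and s: "s \<le> r - 3" and \<phi>: "\<phi> \<in> genV r p s"
    and N: "0 < N" "2 * Pprod r p dvd N"
    and X: "\<And>m1 m2. [m1\<^sup>2 = m2\<^sup>2] (mod N) \<Longrightarrow> X m1 = X m2"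
  shows "(\<Sum>n<nat N. \<phi> (int n) * X (int n)) = 0"
proof -
  obtain J l where \<phi>_eq: "\<phi> = gJ r p J l" and J: "J \<subseteq> {1..r}" "r - s \<le> card J"
      and l: "l \<in> setL r p" and disj: "J \<inter> Jset r p l = {}"
    using \<phi> unfolding genV_def by blast
  have "\<not> J \<subseteq> {1}" using J(2) r s card_mono[of "{1}" J] by auto
  then obtain j where j: "j \<in> J" "2 \<le> j" using J(1) by fastforce
  have j1: "j \<in> {1..r}" using j J(1) by auto
  have "coprime (p j) (2 * Phat r p j)" using odd j(2) j1 coprime_Phat[OF j1] by simp
  obtain e where e: "[e * e = 1] (mod N)" and e_p: "p j dvd e + 1" and e_Phat: "2 * Phat r p j dvd e - 1"
    by (rule exists_square_root_of_unity[OF \<open>coprime (p j) (2 * Phat r p j)\<close> N(1)])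
  show ?thesis
  proof (rule sum_zero_if_negated_by_unit[OF N(1) _ e])
    have "\<phi> (m + N) = \<phi> m" for m
      unfolding \<phi>_eq using N(2) by (intro gJ_cong) (simp add: cong_iff_dvd_diff)
    moreover have "X (m + N) = X m" for m
      by (rule X) (simp add: cong_iff_dvd_diff power2_eq_square algebra_simps)
    ultimately show "\<forall>m. \<phi> (m + N) * X (m + N) = \<phi> m * X m" by simp
    fix m
    have "e * m - - m = (e + 1) * m" "e * m - m = (e - 1) * m" by (simp_all add: algebra_simps)
    then have "[e * m = - m] (mod p j)" "[e * m = m] (mod (2 * Phat r p j))"
      using e_p e_Phat unfolding cong_iff_dvd_diff by simp_all
    then have "\<phi> (e * m) = - \<phi> m"
      unfolding \<phi>_eq by (rule gJ_flip[OF l J(1) disj j])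
    moreover have "X (e * m) = X m"
    proof (rule X)
      have "(e * m)\<^sup>2 - m\<^sup>2 = (e * e - 1) * m\<^sup>2" by (simp add: power2_eq_square algebra_simps)
      then show "[(e * m)\<^sup>2 = m\<^sup>2] (mod N)" using e by (simp add: cong_iff_dvd_diff)
    qed
    ultimately show "\<phi> (e * m) * X (e * m) = - (\<phi> m * X m)" by simp
  qed
qed

lemma Vspace_twisted_sum_zero:
  fixes X :: "int \<Rightarrow> complex"
  assumes "3 \<le> r" "s \<le> r - 3" and g: "g \<in> Vspace r p s"
    and N: "0 < N" "2 * Pprod r p dvd N"
    and X: "\<And>m1 m2. [m1\<^sup>2 = m2\<^sup>2] (mod N) \<Longrightarrow> X m1 = X m2"
  shows "(\<Sum>n<nat N. g (int n) * X (int n)) = 0"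
proof -
  obtain S c where S: "S \<subseteq> genV r p s" and g_eq: "g = (\<lambda>n. \<Sum>\<phi>\<in>S. c \<phi> * \<phi> n)"
    using g unfolding Vspace_def by blast
  have "(\<Sum>n<nat N. g (int n) * X (int n)) = (\<Sum>\<phi>\<in>S. c \<phi> * (\<Sum>n<nat N. \<phi> (int n) * X (int n)))"
    unfolding g_eq by (simp add: sum_distrib_left sum_distrib_right mult.assoc sum.swap[of _ S])
  also have "\<dots> = 0"
  proof (rule sum.neutral, rule ballI)
    fix \<phi> assume "\<phi> \<in> S"
    then have "\<phi> \<in> genV r p s" using S by blast
    from gJ_twisted_sum_zero[where X = X, OF assms(1,2) this N X]
    show "c \<phi> * (\<Sum>n<nat N. \<phi> (int n) * X (int n)) = 0" by simp
  qed
  finally show ?thesis .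
qed

lemma Vspace_twisted_periodic_zero_sum:
  assumes "3 \<le> r" "s \<le> r - 3" and g: "g \<in> Vspace r p s" and \<alpha>: "\<alpha> \<in> \<rat>"
  obtains N where "0 < N" "\<And>m. g (m + N) * quad_phase \<alpha> (2 * of_int (Pprod r p)) (m + N)
                               = g m * quad_phase \<alpha> (2 * of_int (Pprod r p)) m"
    "(\<Sum>n<nat N. g (int n) * quad_phase \<alpha> (2 * of_int (Pprod r p)) (int n)) = 0"
proof -
  obtain N where N: "0 < N" "2 * Pprod r p dvd N"
    and X: "\<And>m1 m2. [m1\<^sup>2 = m2\<^sup>2] (mod N) \<Longrightarrow>
              quad_phase \<alpha> (2 * of_int (Pprod r p)) m1 = quad_phase \<alpha> (2 * of_int (Pprod r p)) m2"
    by (rule quad_phase_square_cong[OF \<alpha> Pprod_pos]) blast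
  show ?thesis
  proof (rule that[OF N(1) _ Vspace_twisted_sum_zero[OF assms(1-3) N X]])
    fix m
    have "g (m + N) = g m"
      using g N(2) by (intro Vspace_cong) (simp_all add: cong_iff_dvd_diff)
    moreover have "[(m + N)\<^sup>2 = m\<^sup>2] (mod N)"
      by (simp add: cong_iff_dvd_diff power2_eq_square algebra_simps)
    ultimately show "g (m + N) * quad_phase \<alpha> (2 * of_int (Pprod r p)) (m + N)
        = g m * quad_phase \<alpha> (2 * of_int (Pprod r p)) m"
      using X by simp
  qed
qed

end

theorem propositionB13:
  fixes r s :: nat and p :: "nat \<Rightarrow> int" and g :: "int \<Rightarrow> complex"
  assumes "3 \<le> r"
    and "\<forall>j\<in>{1..r}. 0 < p j"
    and "\<forall>i\<in>{1..r}. \<forall>j\<in>{1..r}. i \<noteq> j \<longrightarrow> coprime (p i) (p j)"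
    and "\<forall>j\<in>{2..r}. odd (p j)"
    and "s \<le> r - 3"
    and "g \<in> Vspace r p s"
  shows "(\<forall>\<alpha>::real. \<alpha> \<in> \<rat> \<longrightarrow>
            (\<exists>T::int. 0 < T \<and> (\<forall>m. g (m + T) * exp (\<i> * of_real (pi * of_int ((m + T)^2) * \<alpha> / (2 * of_int (Pprod r p))))
                                  = g m * exp (\<i> * of_real (pi * of_int (m^2) * \<alpha> / (2 * of_int (Pprod r p)))))) \<and>
            has_mean_value (\<lambda>m. g m * exp (\<i> * of_real (pi * of_int (m^2) * \<alpha> / (2 * of_int (Pprod r p))))) 0)
       \<and> (\<forall>(\<nu>::nat) (\<alpha>::real). \<alpha> \<in> \<rat> \<longrightarrow>
            nontangential_limit_exists (\<lambda>\<tau>. Theta \<tau> \<nu> g (2 * of_int (Pprod r p))) \<alpha>)"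
proof -
  interpret coprime_moduli r p using assms(2-4) by unfold_locales
  let ?M = "2 * of_int (Pprod r p) :: real"
  have "(\<exists>N>0. \<forall>m. g (m + N) * quad_phase \<alpha> ?M (m + N) = g m * quad_phase \<alpha> ?M m)
      \<and> has_mean_value (\<lambda>m. g m * quad_phase \<alpha> ?M m) 0
      \<and> (\<forall>\<nu>. nontangential_limit_exists (\<lambda>\<tau>. Theta \<tau> \<nu> g ?M) \<alpha>)" if \<alpha>: "\<alpha> \<in> \<rat>" for \<alpha>
  proof -
    obtain N where N: "0 < N" "\<And>m. g (m + N) * quad_phase \<alpha> ?M (m + N) = g m * quad_phase \<alpha> ?M m"
      "(\<Sum>n<nat N. g (int n) * quad_phase \<alpha> ?M (int n)) = 0"
      by (rule Vspace_twisted_periodic_zero_sum[OF assms(1,5,6) \<alpha>]) blast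
    have zsp: "zero_sum_periodic (nat N) (\<lambda>n. g (int (Suc n)) * quad_phase \<alpha> ?M (int (Suc n)))"
      by (rule zero_sum_periodic_Suc_int[OF N])
    have "0 < ?M" using Pprod_pos by simp
    show ?thesis
      using N(1,2) has_mean_value_zero_if_zero_sum_periodic[OF zsp]
        Theta_nontangential_limit[OF \<open>0 < ?M\<close> zsp] by blast
  qed
  then show ?thesis unfolding quad_phase_def by blast
qed

end
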